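(* Let $\mathcal{A}=\langle Q,A,E,I,T\rangle$ be a finite automaton over the free monoid $A^*$ and let $\omega$ and $\omega'$ be two total orders on $Q$. Then $$\mathbf{N}\wedge\mathbf{S}\wedge\mathbf{P}\ \vdash\ \mathsf{M}_\omega(\mathcal{A})\equiv\mathsf{M}_{\omega'}(\mathcal{A}),$$ that is, the two expressions produced by the McNaughton–Yamada algorithm for the orders $\omega$ and $\omega'$ can be proved equal using the natural identities $\mathbf{N}$ together with the aperiodic identities $\mathbf{S}$ and $\mathbf{P}$.
   Context: Rational expressions over $A^*$ are the well-formed formulas built from the constants $\mathsf{0}$ and $\mathsf{1}$ and the letters of $A$ by the binary operators $+$ and $\cdot$ and the unary operator ${}^*$. All expressions are taken reduced modulo the trivial identities $\mathsf{E}+\mathsf{0}\equiv\mathsf{E}$, $\mathsf{0}+\mathsf{E}\equiv\mathsf{E}$, $\mathsf{E}\cdot\mathsf{0}\equiv\mathsf{0}$, $\mathsf{0}\cdot\mathsf{E}\equiv\mathsf{0}$, $\mathsf{E}\cdot\mathsf{1}\equiv\mathsf{E}$, $\mathsf{1}\cdot\mathsf{E}\equiv\mathsf{E}$, $\mathsf{0}^*\equiv\mathsf{1}$, and all computations below are performed modulo them. The natural identities $\mathbf{N}$ are associativity of $+$ and of $\cdot$, distributivity of $\cdot$ over $+$ on both sides, and commutativity $\mathsf{E}+\mathsf{F}\equiv\mathsf{F}+\mathsf{E}$. The aperiodic identities are: - $\mathbf{S}$: $(\mathsf{E}+\mathsf{F})^*\equiv\mathsf{E}^*\cdot(\mathsf{F}\cdot\mathsf{E}^*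 )^*$ and $(\mathsf{E}+\mathsf{F})^*\equiv(\mathsf{E}^*\cdot\mathsf{F})^*\cdot\mathsf{E}^*$; - $\mathbf{P}$: $(\mathsf{E}\cdot\mathsf{F})^*\equiv\mathsf{1}+\mathsf{E}\cdot(\mathsf{F}\cdot\mathsf{E})^*\cdot\mathsf{F}$. For a set $\mathcal{I}$ of identities, $\mathcal{I}\vdash\mathsf{X}\equiv\mathsf{Y}$ means that $\mathsf{X}$ and $\mathsf{Y}$ are related by the smallest congruence on expressions (for $+$, $\cdot$ and ${}^*$) that contains all instances of the identities in $\mathcal{I}$, working modulo the trivial identities. McNaughton–Yamada algorithm for the order $\omega$. Identify $Q$ with $\{1,\dots,n\}$ via $\omega$. For $p,q\in Q$, let $\mathsf{E}_{p,q}$ be the sum, written in some fixed order and bracketing, of the letters labelling the transitions from $p$ to $q$; it is $\mathsf{0}$ if there is none. Define: - $\mathsf{M}^{(0)}_{p,q}=\mathsf{E}_{p,q}$; - for $1\le k\le n$, $\mathsf{M}^{(k)}_{p,q}=\mathsf{M}^{(k-1)}_{p,q}+\mathsf{M}^{(k-1)}_{p,k}\cdot(\mathsf{M}^{(k-1)}_{k,k})^*\cdot\mathsf{M}^{(k-1)}_{k,q}$; - $\mathsf{M}_{p,q}=\mathsf{M}^{(n)}_{p,q}$ if $p\neq q$, and $\mathsf{M}_{p,p}=\mathsf{M}^{(n)}_{p,p}+\mathsf{1}$. Then $\mathsf{M}_\omega(\mathcal{A})=\sum_{p\in I,\,q\in T}\mathsf{M}_{p,q}$, the sum being written in some fixed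 order and bracketing. It denotes the language accepted by $\mathcal{A}$. *)

theory Defs
  imports Main
begin

datatype 'a rexp =
    Zero
  | One
  | Atom 'a
  | Plus "'a rexp" "'a rexp"
  | Times "'a rexp" "'a rexp"
  | Star "'a rexp"

text \<open>Derivability  N \<and> S \<and> P \<turnstile> X \<equiv> Y : the smallest congruence (for +, \<cdot>, *)
  containing all instances of N, S, P, working modulo the trivial identities
  (which are therefore included as generators of the congruence).\<close>

inductive NSP_eq :: "'a rexp \<Rightarrow> 'a rexp \<Rightarrow> bool" where
  refl: "NSP_eq e e"
| sym: "NSP_eq e f \<Longrightarrow> NSP_eq f e"
| trans: "NSP_eq e f \<Longrightarrow> NSP_eq f g \<Longrightarrow> NSP_eq e g"
| cong_plus: "NSP_eq e e' \<Longrightarrow> NSP_eq f f' \<Longrightarrow> NSP_eq (Plus e f) (Plus e' f')"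
| cong_times: "NSP_eq e e' \<Longrightarrow> NSP_eq f f' \<Longrightarrow> NSP_eq (Times e f) (Times e' f')"
| cong_star: "NSP_eq e e' \<Longrightarrow> NSP_eq (Star e) (Star e')"
| triv_plus_zero_r: "NSP_eq (Plus e Zero) e"
| triv_plus_zero_l: "NSP_eq (Plus Zero e) e"
| triv_times_zero_r: "NSP_eq (Times e Zero) Zero"
| triv_times_zero_l: "NSP_eq (Times Zero e) Zero"
| triv_times_one_r: "NSP_eq (Times e One) e"
| triv_times_one_l: "NSP_eq (Times One e) e"
| triv_star_zero: "NSP_eq (Star Zero) One"
| N_plus_assoc: "NSP_eq (Plus (Plus e f) g) (Plus e (Plus f g))"
| N_times_assoc: "NSP_eq (Times (Times e f) g) (Times e (Times f g))"
| N_distrib_l: "NSP_eq (Times e (Plus f g)) (Plus (Times e f) (Times e g))"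
| N_distrib_r: "NSP_eq (Times (Plus e f) g) (Plus (Times e g) (Times f g))"
| N_plus_comm: "NSP_eq (Plus e f) (Plus f e)"
| S1: "NSP_eq (Star (Plus e f)) (Times (Star e) (Star (Times f (Star e))))"
| S2: "NSP_eq (Star (Plus e f)) (Times (Star (Times (Star e) f)) (Star e))"
| P: "NSP_eq (Star (Times e f)) (Plus One (Times (Times e (Star (Times f e))) f))"

fun sum_rexp :: "'a rexp list \<Rightarrow> 'a rexp" where
  "sum_rexp [] = Zero"
| "sum_rexp [e] = e"
| "sum_rexp (e # es) = Plus e (sum_rexp es)"

text \<open>For a total order w on the finite set Q, the k-th state (0-based; i.e. the state
  numbered k+1 under the identification of Q with {1..n}) is the state having exactly
  k strict predecessors.\<close>

definition ord_nth :: "'q set \<Rightarrow> ('q \<times> 'q) set \<Rightarrow> nat \<Rightarrow> 'q" where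
  "ord_nth Q w k = (THE q. q \<in> Q \<and> card {p \<in> Q. (p, q) \<in> w \<and> p \<noteq> q} = k)"

text \<open>lbl p q : a list enumerating (without repetition) the letters labelling the
  transitions from p to q, i.e. the chosen order in which E_{p,q} is written.\<close>

definition letter_list_ok :: "('q \<times> 'a \<times> 'q) set \<Rightarrow> ('q \<Rightarrow> 'q \<Rightarrow> 'a list) \<Rightarrow> bool" where
  "letter_list_ok E lbl \<longleftrightarrow>
     (\<forall>p q. distinct (lbl p q) \<and> set (lbl p q) = {a. (p, a, q) \<in> E})"

definition Emat :: "('q \<Rightarrow> 'q \<Rightarrow> 'a list) \<Rightarrow> 'q \<Rightarrow> 'q \<Rightarrow> 'a rexp" where
  "Emat lbl p q = sum_rexp (map Atom (lbl p q))"

fun MY_step :: "'q set \<Rightarrow> ('q \<times> 'q) set \<Rightarrow> ('q \<Rightarrow> 'q \<Rightarrow> 'a list) \<Rightarrow> nat \<Rightarrow> 'q \<Rightarrow> 'q \<Rightarrow> 'a rexp" where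
  "MY_step Q w lbl 0 p q = Emat lbl p q"
| "MY_step Q w lbl (Suc k) p q =
     (let s = ord_nth Q w k in
      Plus (MY_step Q w lbl k p q)
           (Times (Times (MY_step Q w lbl k p s) (Star (MY_step Q w lbl k s s)))
                  (MY_step Q w lbl k s q)))"

definition MY_entry :: "'q set \<Rightarrow> ('q \<times> 'q) set \<Rightarrow> ('q \<Rightarrow> 'q \<Rightarrow> 'a list) \<Rightarrow> 'q \<Rightarrow> 'q \<Rightarrow> 'a rexp" where
  "MY_entry Q w lbl p q =
     (if p = q then Plus (MY_step Q w lbl (card Q) p p) One
      else MY_step Q w lbl (card Q) p q)"

definition MY_expr :: "'q set \<Rightarrow> ('q \<times> 'q) set \<Rightarrow> ('q \<Rightarrow> 'q \<Rightarrow> 'a list) \<Rightarrow> ('q \<times> 'q) list \<Rightarrow> 'a rexp" where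
  "MY_expr Q w lbl ps = sum_rexp (map (\<lambda>(p, q). MY_entry Q w lbl p q) ps)"

definition pair_list_ok :: "'q set \<Rightarrow> 'q set \<Rightarrow> ('q \<times> 'q) list \<Rightarrow> bool" where
  "pair_list_ok I T ps \<longleftrightarrow> distinct ps \<and> set ps = I \<times> T"

definition finite_automaton :: "'q set \<Rightarrow> 'a set \<Rightarrow> ('q \<times> 'a \<times> 'q) set \<Rightarrow> 'q set \<Rightarrow> 'q set \<Rightarrow> bool" where
  "finite_automaton Q A E I T \<longleftrightarrow> finite Q \<and> finite A \<and> E \<subseteq> Q \<times> A \<times> Q \<and> I \<subseteq> Q \<and> T \<subseteq> Q"

end

theory Submission
  imports Defs "HOL-Library.Multiset"
begin

text \<open>Derivability modulo N, S, P is a congruence, so expressions modulo it form a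
  semiring (by N and the trivial identities) carrying a star operation that satisfies S and P.
  In this semiring the McNaughton--Yamada expression is the entry-wise result of eliminating
  the states of the automaton one after the other from the transition matrix. Eliminating
  two states commutes: both orders give the same matrix, by identities that follow from S and
  P alone. Hence the result depends only on the set of eliminated states, i.e.\ not on the
  order; the orders in which letters and pairs of states are summed do not matter either,
  addition being commutative.\<close>

locale aperiodic_star =
  fixes star :: "'a::{semiring_0,monoid_mult} \<Rightarrow> 'a"
  assumes star_plus_left: "star (x + y) = star x * star (y * star x)"
    and star_plus_right: "star (x + y) = star (star x * y) * star x"
    and star_times: "star (x * y) = 1 + x * star (y * x) * y"
begin

lemma star_unfold_right: "star x = 1 + star x * x"
  using star_times[of 1 x] by simp

lemma star_slide: "star (x * y) * x = x * star (y * x)"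
proof -
  have "star (x * y) * x = x + x * (star (y * x) * (y * x))"
    by (subst star_times) (simp add: algebra_simps)
  also have "\<dots> = x * star (y * x)"
    by (subst (2) star_unfold_right) (simp add: algebra_simps)
  finally show ?thesis .
qed

text \<open>For two states s, t with entries a, b, c, d at (s,s), (s,t), (t,s), (t,t):
  a + b * star d * c is the loop at s once t is eliminated, and d + c * star a * b the loop
  at t once s is eliminated.\<close>

lemma star_loop_eliminated:
  "star (a + b * star d * c) = star a + star a * b * star (d + c * star a * b) * c * star a"
proof -
  have "star (a + b * star d * c) = star a * star (b * (star d * c * star a))"
    using star_plus_left[of a "b * star d * c"] by (simp add: mult.assoc)
  also have "\<dots> = star a * (1 + b * (star (star d * c * star a * b) * star d) * c * star a)"
    by (subst star_times) (simp only: mult.assoc)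
  also have "\<dots> = star a * (1 + b * star (d + c * star a * b) * c * star a)"
    using star_plus_right[of d "c * star a * b"] by (simp add: mult.assoc)
  finally show ?thesis by (simp add: algebra_simps)
qed

lemma star_loop_eliminated_slide:
  "star a * b * star (d + c * star a * b) = star (a + b * star d * c) * b * star d"
proof -
  have "star (a + b * star d * c) * b * star d
      = star a * (star (b * (star d * c * star a)) * b) * star d"
    using star_plus_left[of a "b * star d * c"] by (simp add: mult.assoc)
  also have "\<dots> = star a * b * (star (star d * (c * star a * b)) * star d)"
    by (subst star_slide) (simp only: mult.assoc)
  also have "\<dots> = star a * b * star (d + c * star a * b)"
    by (simp only: star_plus_right)
  finally show ?thesis by simp
qed

definition eliminate :: "'q \<Rightarrow> ('q \<Rightarrow> 'q \<Rightarrow> 'a) \<Rightarrow> 'q \<Rightarrow> 'q \<Rightarrow> 'a" where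
  "eliminate s M p q = M p q + M p s * star (M s s) * M s q"

text \<open>Both sides are the entry at (p, q) after eliminating s and t, in either order;
  X and Y stand for the stars of the loops at t and at s after eliminating s, resp.\ t.\<close>

lemma eliminate_two_states_symmetric:
  assumes Y: "Y = star a + star a * b * X * c * star a"
    and X: "X = star d + star d * c * Y * b * star d"
    and XY: "star a * b * X = Y * b * star d"
    and YX: "star d * c * Y = X * c * star a"
  shows "pq + ps * star a * sq + (pt + ps * star a * b) * X * (tq + c * star a * sq)
       = pq + pt * star d * tq + (ps + pt * star d * c) * Y * (sq + b * star d * tq)"
proof -
  have "pq + pt * star d * tq + (ps + pt * star d * c) * Y * (sq + b * star d * tq)
      = pq + pt * (star d + star d * c * Y * b * star d) * tq + ps * Y * sq
        + ps * (Y * b * star d) * tq + pt * (star d * c * Y) * sq"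
    by (simp add: algebra_simps)
  also have "\<dots> = pq + pt * X * tq + ps * Y * sq
        + ps * (star a * b * X) * tq + pt * (X * c * star a) * sq"
    by (simp only: X[symmetric]) (simp only: XY[symmetric] YX)
  also have "\<dots> = pq + ps * star a * sq + (pt + ps * star a * b) * X * (tq + c * star a * sq)"
    unfolding Y by (simp add: algebra_simps)
  finally show ?thesis by simp
qed

lemma eliminate_commute: "eliminate s \<circ> eliminate t = eliminate t \<circ> eliminate s"
proof (intro ext)
  fix M p q
  show "(eliminate s \<circ> eliminate t) M p q = (eliminate t \<circ> eliminate s) M p q"
  proof (cases "s = t")
    case False
    let ?a = "M s s" and ?b = "M s t" and ?c = "M t s" and ?d = "M t t"
    have "eliminate t (eliminate s M) p q = eliminate s (eliminate t M) p q"
      using False eliminate_two_states_symmetric[OF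
          star_loop_eliminated[of ?a ?b ?d ?c] star_loop_eliminated[of ?d ?c ?a ?b]
          star_loop_eliminated_slide[of ?a ?b ?d ?c] star_loop_eliminated_slide[of ?d ?c ?a ?b],
          of "M p q" "M p s" "M s q" "M p t" "M t q"]
      by (simp add: eliminate_def)
    then show ?thesis by simp
  qed simp
qed

lemma fold_eliminate_perm:
  "mset xs = mset ys \<Longrightarrow> fold eliminate xs M = fold eliminate ys M"
  using fold_multiset_equiv[of xs eliminate ys] eliminate_commute by metis

end

lemma NSP_equivp: "equivp NSP_eq"
  by (rule equivpI; auto intro: reflpI sympI transpI NSP_eq.intros)

quotient_type 'a req = "'a rexp" / NSP_eq
  morphisms rep_req abs_req
  by (rule NSP_equivp)

instantiation req :: (type) semiring_0
begin
lift_definition zero_req :: "'a req" is Zero .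
lift_definition plus_req :: "'a req \<Rightarrow> 'a req \<Rightarrow> 'a req" is Plus
  by (rule NSP_eq.cong_plus)
lift_definition times_req :: "'a req \<Rightarrow> 'a req \<Rightarrow> 'a req" is Times
  by (rule NSP_eq.cong_times)
instance
  by standard (transfer, fact NSP_eq.intros)+
end

instantiation req :: (type) monoid_mult
begin
lift_definition one_req :: "'a req" is One .
instance
  by standard (transfer, fact NSP_eq.intros)+
end

lift_definition star_req :: "'a req \<Rightarrow> 'a req" is Star
  by (rule NSP_eq.cong_star)

interpretation req: aperiodic_star star_req
  by standard (transfer, fact NSP_eq.intros)+

lemma abs_req_simps [simp]:
  "abs_req Zero = 0" "abs_req One = 1"
  "abs_req (Plus x y) = abs_req x + abs_req y"
  "abs_req (Times x y) = abs_req x * abs_req y"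
  "abs_req (Star x) = star_req (abs_req x)"
  by (simp_all add: zero_req.abs_eq one_req.abs_eq plus_req.abs_eq times_req.abs_eq
      star_req.abs_eq)

lemma abs_req_sum_rexp: "abs_req (sum_rexp xs) = sum_list (map abs_req xs)"
  by (induction xs rule: sum_rexp.induct) auto

lemma abs_req_sum_rexp_distinct:
  "distinct xs \<Longrightarrow> distinct ys \<Longrightarrow> set xs = set ys \<Longrightarrow>
   abs_req (sum_rexp (map f xs)) = abs_req (sum_rexp (map f ys))"
  by (simp add: abs_req_sum_rexp sum_list_distinct_conv_sum_set)

lemma abs_req_Emat:
  assumes "letter_list_ok E lbl" and "letter_list_ok E lbl'"
  shows "abs_req (Emat lbl p q) = abs_req (Emat lbl' p q)"
  using assms unfolding letter_list_ok_def Emat_def by (metis abs_req_sum_rexp_distinct)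

lemma abs_req_MY_step:
  "abs_req (MY_step Q w lbl k p q) =
   fold req.eliminate (map (ord_nth Q w) [0..<k]) (\<lambda>p q. abs_req (Emat lbl p q)) p q"
  by (induction k arbitrary: p q) (simp_all add: Let_def req.eliminate_def)

lemma card_strict_predecessors_less:
  assumes "finite Q" and "linear_order_on Q w"
    and "p \<in> Q" and "q \<in> Q" and "(p, q) \<in> w" and "p \<noteq> q"
  shows "card {x \<in> Q. (x, p) \<in> w \<and> x \<noteq> p} < card {x \<in> Q. (x, q) \<in> w \<and> x \<noteq> q}"
proof (rule psubset_card_mono)
  have "trans w" and "antisym w"
    using assms(2) by (auto simp: linear_order_on_def partial_order_on_def preorder_on_def)
  then show "{x \<in> Q. (x, p) \<in> w \<and> x \<noteq> p} \<subset> {x \<in> Q. (x, q) \<in> w \<and> x \<noteq> q}"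
    using assms(3-6) unfolding trans_def antisym_def by blast
qed (use assms(1) in simp)

lemma bij_betw_ord_nth:
  assumes fin: "finite Q" and lin: "linear_order_on Q w"
  shows "bij_betw (ord_nth Q w) {0..<card Q} Q"
proof -
  define rank where "rank q = card {p \<in> Q. (p, q) \<in> w \<and> p \<noteq> q}" for q
  have "inj_on rank Q"
  proof (rule inj_onI)
    fix p q assume "p \<in> Q" "q \<in> Q" "rank p = rank q"
    moreover have "(p, q) \<in> w \<or> (q, p) \<in> w \<or> p = q"
      using lin \<open>p \<in> Q\<close> \<open>q \<in> Q\<close> by (auto simp: linear_order_on_def total_on_def)
    ultimately show "p = q"
      using card_strict_predecessors_less[OF fin lin, of p q] card_strict_predecessors_less[OF fin lin, of q p]
      unfolding rank_def by auto
  qed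
  moreover have "rank ` Q \<subseteq> {0..<card Q}"
  proof
    fix k assume "k \<in> rank ` Q"
    then obtain q where "q \<in> Q" and "k = rank q" by blast
    moreover have "{p \<in> Q. (p, q) \<in> w \<and> p \<noteq> q} \<subset> Q"
      using \<open>q \<in> Q\<close> by blast
    ultimately show "k \<in> {0..<card Q}"
      unfolding rank_def using fin by (simp add: psubset_card_mono)
  qed
  ultimately have "bij_betw rank Q {0..<card Q}"
    by (simp add: bij_betw_def card_image card_subset_eq)
  moreover have "ord_nth Q w = the_inv_into Q rank"
    unfolding ord_nth_def the_inv_into_def rank_def by simp
  ultimately show ?thesis
    by (simp add: bij_betw_the_inv_into)
qed

lemma mset_ord_nth_enum:
  assumes "finite Q" and "linear_order_on Q w"
  shows "mset (map (ord_nth Q w) [0..<card Q]) = mset_set Q"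
  using bij_betw_ord_nth[OF assms]
  by (simp add: bij_betw_def image_mset_mset_set)

theorem corollary3p10:
  fixes Q :: "'q set" and A :: "'a set" and E :: "('q \<times> 'a \<times> 'q) set"
    and I T :: "'q set" and w w' :: "('q \<times> 'q) set"
    and lbl lbl' :: "'q \<Rightarrow> 'q \<Rightarrow> 'a list" and ps ps' :: "('q \<times> 'q) list"
  assumes "finite_automaton Q A E I T"
    and "linear_order_on Q w" and "linear_order_on Q w'"
    and "letter_list_ok E lbl" and "letter_list_ok E lbl'"
    and "pair_list_ok I T ps" and "pair_list_ok I T ps'"
  shows "NSP_eq (MY_expr Q w lbl ps) (MY_expr Q w' lbl' ps')"
proof -
  have "finite Q"
    using assms(1) by (simp add: finite_automaton_def)
  then have "mset (map (ord_nth Q w) [0..<card Q]) = mset (map (ord_nth Q w') [0..<card Q])"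
    using mset_ord_nth_enum assms(2,3) by metis
  moreover have "(\<lambda>p q. abs_req (Emat lbl p q)) = (\<lambda>p q. abs_req (Emat lbl' p q))"
    using abs_req_Emat[OF assms(4,5)] by blast
  ultimately have "abs_req (MY_step Q w lbl (card Q) p q) = abs_req (MY_step Q w' lbl' (card Q) p q)"
    for p q
    unfolding abs_req_MY_step by (metis req.fold_eliminate_perm)
  then have entry: "abs_req (MY_entry Q w lbl p q) = abs_req (MY_entry Q w' lbl' p q)" for p q
    by (simp add: MY_entry_def)
  have "abs_req (MY_expr Q w lbl ps) = abs_req (MY_expr Q w lbl ps')"
    using assms(6,7) unfolding pair_list_ok_def MY_expr_def
    by (metis abs_req_sum_rexp_distinct)
  also have "\<dots> = abs_req (MY_expr Q w' lbl' ps')"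
    by (simp add: MY_expr_def abs_req_sum_rexp comp_def case_prod_beta entry)
  finally show ?thesis
    by (simp add: req.abs_eq_iff)
qed

end
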